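(* Let $Q:[0,\infty)\to\mathbb{R}$ be a function analytic on $[0,\infty)$ such that all moments $\int_0^\infty x^{j}x^{1/2}e^{-Q(x)}\,dx$ and $\int_{-\infty}^\infty t^{j}e^{-Q(t^2)}\,dt$, $j=0,1,2,\dots$, are finite. Let $n\ge1$, and let $x_1^{(L,\frac12)}<\dots<x_n^{(L,\frac12)}$ and $w_1^{(L,\frac12)},\dots,w_n^{(L,\frac12)}$ be the nodes and weights of the $n$-point Gaussian quadrature rule for the weight function $x^{1/2}e^{-Q(x)}$ on $[0,\infty)$. Then the nodes $x_1^{(H)}<\dots<x_{2n+1}^{(H)}$ and weights $w_1^{(H)},\dots,w_{2n+1}^{(H)}$ of the $(2n+1)$-point Gaussian quadrature rule for the weight function $e^{-Q(x^2)}$ on $(-\infty,\infty)$ are given, for $k=1,\dots,n$, by $$x_{n+1+k}^{(H)}=\sqrt{x_k^{(L,\frac12)}},\qquad w_{n+1+k}^{(H)}=\frac{w_k^{(L,\frac12)}}{2x_k^{(L,\frac12)}},$$ $$x_{n+1-k}^{(H)}=-\sqrt{x_k^{(L,\frac12)}},\qquad w_{n+1-k}^{(H)}=\frac{w_k^{(L,\frac12)}}{2x_k^{(L,\frac12)}},$$ together with $$x_{n+1}^{(H)}=0,\qquad w_{n+1}^{(H)}=\int_{-\infty}^\infty e^{-Q(t^2)}\,dt-\sum_{k=1}^n\left[w_{n+1+k}^{(H)}+w_{n+1-k}^{(H)}\right].$$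
   Context: For a positive weight function $w$ on an interval $(a,b)$ with finite moments, the $m$-point Gaussian quadrature rule consists of nodes $x_1<\dots<x_m$ (the zeros of the degree-$m$ orthogonal polynomial with respect to $w$) and positive weights $w_1,\dots,w_m$ such that $\int_a^b f(x)w(x)\,dx=\sum_{k=1}^m w_k f(x_k)$ for all polynomials $f$ of degree at most $2m-1$. *)

theory Defs
  imports "HOL-Analysis.Analysis" "HOL-Computational_Algebra.Polynomial"
begin

definition real_analytic_on :: "(real \<Rightarrow> real) \<Rightarrow> real set \<Rightarrow> bool" where
  "real_analytic_on f S \<longleftrightarrow>
     (\<forall>x0\<in>S. \<exists>r>0. \<exists>a :: nat \<Rightarrow> real.
        \<forall>x\<in>S. \<bar>x - x0\<bar> < r \<longrightarrow> (\<lambda>k. a k * (x - x0) ^ k) sums f x)"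

definition gauss_rule ::
  "(real \<Rightarrow> real) \<Rightarrow> real set \<Rightarrow> nat \<Rightarrow> (nat \<Rightarrow> real) \<Rightarrow> (nat \<Rightarrow> real) \<Rightarrow> bool" where
  "gauss_rule w S m x c \<longleftrightarrow>
     (\<forall>i\<in>{1..<m}. x i < x (i + 1)) \<and>
     (\<forall>i\<in>{1..m}. x i \<in> S \<and> c i > 0) \<and>
     (\<forall>p :: real poly. degree p \<le> 2 * m - 1 \<longrightarrow>
        set_integrable lborel S (\<lambda>t. poly p t * w t) \<and>
        (LINT t:S|lborel. poly p t * w t) = (\<Sum>k=1..m. c k * poly p (x k)))"

end

theory Submission
  imports Defs
begin

(*
  Substituting x = t^2 turns the even weight E(t) = exp (-Q (t^2)) on the real line into the
  weight sqrt x * E (sqrt x) = x^(1/2) exp (-Q x) on (0, oo): the odd moments of E vanish,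
  and its moment of order 2i+2 is the i-th moment of the half-line weight. Hence the
  symmetrized rule, with nodes +-sqrt (x_k), weights w_k / (2 x_k), and the node 0 carrying
  the remaining mass, integrates t^j exactly for every j <= 4n+1. Its nodes increase and
  its weights are positive (integrate the square of a Lagrange polynomial), so it is a Gauss
  rule with 2n+1 nodes. Gauss rules are unique: the difference of the node polynomials of
  two of them has degree < m and is orthogonal to itself, so it vanishes at all nodes; then
  Lagrange polynomials identify the weights.
*)

lemma real_analytic_on_imp_isCont:
  assumes "real_analytic_on f S" and "x \<in> interior S"
  shows "isCont f x"
proof -
  obtain e where e: "e > 0" "ball x e \<subseteq> S"
    using assms(2) by (meson mem_interior)
  obtain r a where r: "r > 0"
    and a: "\<And>y. y \<in> S \<Longrightarrow> \<bar>y - x\<bar> < r \<Longrightarrow> (\<lambda>k. a k * (y - x) ^ k) sums f y"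
    using assms interior_subset unfolding real_analytic_on_def by blast
  define s where "s = min r e"
  have s: "s > 0" "s \<le> r" using r e by (simp_all add: s_def)
  have in_S: "y \<in> S" if "\<bar>y - x\<bar> < s" for y
    using that e(2) by (auto simp: s_def dist_real_def)
  define P where "P h = (\<Sum>k. a k * h ^ k)" for h :: real
  have f_eq: "f y = P (y - x)" if "\<bar>y - x\<bar> < s" for y
    using a[OF in_S[OF that]] that sums_unique by (auto simp: P_def s_def)
  have "(\<lambda>k. a k * (s / 2) ^ k) sums f (x + s / 2)"
    using a[OF in_S, of "x + s / 2"] s by simp
  then have "isCont P 0"
    unfolding P_def by (intro isCont_powser[of _ "s / 2"] sums_summable) (use s in auto)
  then have "isCont (\<lambda>y. P (y - x)) x"
    using continuous_at_compose[of x "\<lambda>y. y - x" P] by (simp add: o_def)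
  moreover have "eventually (\<lambda>y. f y = P (y - x)) (nhds x)"
    unfolding eventually_nhds_metric using s by (auto intro!: exI[of _ s] f_eq simp: dist_real_def)
  ultimately show ?thesis
    using isCont_cong[of f "\<lambda>y. P (y - x)" x] by blast
qed

section \<open>Node polynomials\<close>

lemma degree_diff_less_if_lead_coeff_eq:
  fixes p q :: "'a::ab_group_add poly"
  assumes "degree p = n" and "degree q = n" and "lead_coeff p = lead_coeff q" and "n > 0"
  shows "degree (p - q) < n"
  using assms by (intro degree_lessI) (auto simp: coeff_eq_0 le_less)

definition node_poly :: "(nat \<Rightarrow> real) \<Rightarrow> nat set \<Rightarrow> real poly" where
  "node_poly x A = (\<Prod>k\<in>A. [:- x k, 1:])"

lemma poly_node_poly: "poly (node_poly x A) t = (\<Prod>k\<in>A. t - x k)"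
  by (simp add: node_poly_def poly_prod)

lemma degree_node_poly: "finite A \<Longrightarrow> degree (node_poly x A) = card A"
  unfolding node_poly_def by (subst degree_prod_sum_eq) auto

lemma lead_coeff_node_poly: "lead_coeff (node_poly x A) = 1"
  by (simp add: node_poly_def lead_coeff_prod)

lemma poly_node_poly_eq_0_iff:
  "finite A \<Longrightarrow> poly (node_poly x A) t = 0 \<longleftrightarrow> (\<exists>k\<in>A. t = x k)"
  by (simp add: poly_node_poly)

lemma poly_node_poly_at_node: "finite A \<Longrightarrow> k \<in> A \<Longrightarrow> poly (node_poly x A) (x k) = 0"
  by (auto simp: poly_node_poly_eq_0_iff)

lemma increasing_nodes_sorted:
  fixes x :: "nat \<Rightarrow> 'a::linorder"
  assumes "\<forall>i\<in>{1..<m}. x i < x (i + 1)"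
  shows "sorted_wrt (<) (map x [1..<Suc m])"
  using assms by (subst sorted_wrt_iff_nth_Suc_transp) (auto simp: transp_def simp del: upt_Suc)

lemma increasing_nodes_inj_on:
  fixes x :: "nat \<Rightarrow> 'a::linorder"
  assumes "\<forall>i\<in>{1..<m}. x i < x (i + 1)"
  shows "inj_on x {1..m}"
proof -
  have "distinct (map x [1..<Suc m])"
    using increasing_nodes_sorted[OF assms] strict_sorted_iff by blast
  then show ?thesis
    by (metis distinct_map set_upt atLeastLessThanSuc_atLeastAtMost)
qed

lemma increasing_nodes_unique:
  fixes x y :: "nat \<Rightarrow> 'a::linorder"
  assumes "\<forall>i\<in>{1..<m}. x i < x (i + 1)" and "\<forall>i\<in>{1..<m}. y i < y (i + 1)"
    and "x ` {1..m} = y ` {1..m}" and "i \<in> {1..m}"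
  shows "x i = y i"
proof -
  have "map x [1..<Suc m] = map y [1..<Suc m]"
    using assms(3) by (intro strict_sorted_equal increasing_nodes_sorted assms(1,2))
      (simp del: upt_Suc add: atLeastLessThanSuc_atLeastAtMost)
  then show ?thesis
    using assms(4) by (auto simp del: upt_Suc)
qed

section \<open>Lebesgue integrals on the real line\<close>

lemma lborel_integral_odd_eq_0:
  fixes h :: "real \<Rightarrow> real"
  assumes "\<And>t. h (- t) = - h t"
  shows "integral\<^sup>L lborel h = 0"
proof -
  have "integral\<^sup>L lborel h = integral\<^sup>L lborel (\<lambda>t. h (- t))"
    using lborel_integral_real_affine[of "-1" h 0] by simp
  also have "\<dots> = - integral\<^sup>L lborel h"
    by (simp add: assms)
  finally show ?thesis
    by simp
qed

lemma lborel_integral_even: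
  fixes h :: "real \<Rightarrow> real"
  assumes h: "integrable lborel h" and even: "\<And>t. h (- t) = h t"
  shows "integral\<^sup>L lborel h = 2 * (LINT t:{0<..}|lborel. h t)"
proof -
  have int_on: "set_integrable lborel A h" if "A \<in> sets borel" for A
    using h that unfolding set_integrable_def by (intro integrable_mult_indicator) simp_all
  have "has_bochner_integral lborel h (2 *\<^sub>R (LINT t:{0..}|lborel. h t))"
    using int_on[of "{0..}"] unfolding set_integrable_def set_lebesgue_integral_def
    by (intro has_bochner_integral_even_function even has_bochner_integral_integrable) simp
  moreover have "(LINT t:{0..}|lborel. h t) = (LINT t:{0<..}|lborel. h t)"
  proof (rule set_integral_cong_set)
    show "AE t in lborel. t \<in> {0<..} \<longleftrightarrow> t \<in> {0::real..}"
      by (rule eventually_mono[OF AE_lborel_singleton[of 0]]) auto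
  qed (use int_on[of "{0..}"] int_on[of "{0<..}"] in
      \<open>auto simp: set_integrable_def set_borel_measurable_def intro: borel_measurable_integrable\<close>)
  ultimately show ?thesis
    by (simp add: has_bochner_integral_iff)
qed

lemma set_integral_substitution_square:
  fixes f :: "real \<Rightarrow> real"
  assumes cont: "\<And>x. x > 0 \<Longrightarrow> isCont f x" and nonneg: "\<And>x. x > 0 \<Longrightarrow> f x \<ge> 0"
    and int: "set_integrable lborel {0<..} (\<lambda>t. f (t\<^sup>2) * (2 * t))"
  shows "set_integrable lborel {0<..} f"
    and "(LINT x:{0<..}|lborel. f x) = (LINT t:{0<..}|lborel. f (t\<^sup>2) * (2 * t))"
proof -
  have lim0: "((ereal \<circ> (\<lambda>t. t\<^sup>2) \<circ> real_of_ereal) \<longlongrightarrow> 0) (at_right 0)"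
  proof -
    have "((\<lambda>t::real. t\<^sup>2) \<longlongrightarrow> 0) (at_right 0)"
      by (auto intro!: tendsto_eq_intros)
    then show ?thesis
      unfolding zero_ereal_def by (simp add: ereal_tendsto_simps1 ereal_tendsto_simps2 flip: comp_assoc)
  qed
  have lim_inf: "((ereal \<circ> (\<lambda>t. t\<^sup>2) \<circ> real_of_ereal) \<longlongrightarrow> \<infinity>) (at_left \<infinity>)"
  proof -
    have "filterlim (\<lambda>t::real. t\<^sup>2) at_top at_top"
      by (rule filterlim_pow_at_top[OF _ filterlim_ident]) auto
    then show ?thesis
      by (simp add: ereal_tendsto_simps1 ereal_tendsto_simps2 flip: comp_assoc)
  qed
  have "einterval 0 \<infinity> = {0<..}"
    by (auto simp: einterval_def)
  note subst = interval_integral_substitution_nonneg[of 0 \<infinity> "\<lambda>t. t\<^sup>2" "\<lambda>t. 2 * t" f 0 \<infinity>]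
  have "set_integrable lborel (einterval 0 \<infinity>) f \<and>
      (LBINT x=0..\<infinity>. f x) = (LBINT t=0..\<infinity>. f (t\<^sup>2) * (2 * t))"
    using lim0 lim_inf int cont nonneg \<open>einterval 0 \<infinity> = {0<..}\<close>
    by (intro conjI subst) (auto intro!: derivative_eq_intros)
  then show "set_integrable lborel {0<..} f"
    and "(LINT x:{0<..}|lborel. f x) = (LINT t:{0<..}|lborel. f (t\<^sup>2) * (2 * t))"
    by (simp_all add: zero_ereal_def interval_integral_to_infinity_eq)
qed

lemma integral_poly_square_pos:
  fixes q :: "real poly" and w :: "real \<Rightarrow> real"
  assumes int: "integrable lborel (\<lambda>t. (poly q t)\<^sup>2 * w t)" and pos: "\<And>t. w t > 0"
    and "q \<noteq> 0"
  shows "integral\<^sup>L lborel (\<lambda>t. (poly q t)\<^sup>2 * w t) > 0"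
proof -
  have nonneg: "AE t in lborel. 0 \<le> (poly q t)\<^sup>2 * w t"
    using pos by (simp add: less_imp_le)
  have "integral\<^sup>L lborel (\<lambda>t. (poly q t)\<^sup>2 * w t) \<noteq> 0"
  proof
    assume "integral\<^sup>L lborel (\<lambda>t. (poly q t)\<^sup>2 * w t) = 0"
    then have "AE t in lborel. (poly q t)\<^sup>2 * w t = 0"
      using integral_nonneg_eq_0_iff_AE[OF int nonneg] by simp
    moreover have "AE t in lborel. t \<notin> {t. poly q t = 0}"
      by (intro AE_not_in finite_imp_null_set_lborel poly_roots_finite \<open>q \<noteq> 0\<close>)
    ultimately have "AE t in (lborel :: real measure). False"
      by eventually_elim (use pos in \<open>simp add: less_imp_neq[symmetric]\<close>)
    then show False
      using ae_filter_eq_bot_iff[of "lborel :: real measure"] by (simp add: trivial_limit_def)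
  qed
  moreover have "integral\<^sup>L lborel (\<lambda>t. (poly q t)\<^sup>2 * w t) \<ge> 0"
    using nonneg by (rule integral_nonneg_AE)
  ultimately show ?thesis
    by simp
qed

lemma exact_on_polys_if_exact_on_monomials:
  fixes w :: "real \<Rightarrow> real" and x c :: "nat \<Rightarrow> real"
  assumes int: "\<And>j. j \<le> d \<Longrightarrow> integrable M (\<lambda>t. t ^ j * w t)"
    and exact: "\<And>j. j \<le> d \<Longrightarrow> integral\<^sup>L M (\<lambda>t. t ^ j * w t) = (\<Sum>k\<in>I. c k * x k ^ j)"
    and deg: "degree p \<le> d"
  shows "integrable M (\<lambda>t. poly p t * w t)"
    and "integral\<^sup>L M (\<lambda>t. poly p t * w t) = (\<Sum>k\<in>I. c k * poly p (x k))"
proof -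
  have expand: "(\<lambda>t. poly p t * w t) = (\<lambda>t. \<Sum>j\<le>degree p. coeff p j * (t ^ j * w t))"
    by (auto simp: poly_altdef sum_distrib_right mult.assoc)
  have int_p: "integrable M (\<lambda>t. coeff p j * (t ^ j * w t))" if "j \<le> degree p" for j
    using deg that by (intro integrable_mult_right int) simp
  then show "integrable M (\<lambda>t. poly p t * w t)"
    unfolding expand by (intro Bochner_Integration.integrable_sum) simp
  have "integral\<^sup>L M (\<lambda>t. poly p t * w t) = (\<Sum>j\<le>degree p. coeff p j * integral\<^sup>L M (\<lambda>t. t ^ j * w t))"
    unfolding expand using int_p by (subst Bochner_Integration.integral_sum) simp_all
  also have "\<dots> = (\<Sum>j\<le>degree p. \<Sum>k\<in>I. c k * (coeff p j * x k ^ j))"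
    using deg by (intro sum.cong refl) (simp add: exact sum_distrib_left mult.left_commute)
  also have "\<dots> = (\<Sum>k\<in>I. c k * poly p (x k))"
    by (subst sum.swap) (simp add: poly_altdef sum_distrib_left)
  finally show "integral\<^sup>L M (\<lambda>t. poly p t * w t) = (\<Sum>k\<in>I. c k * poly p (x k))" .
qed

section \<open>Gauss rules\<close>

lemma gauss_rule_exact:
  assumes "gauss_rule w S m x c" and "degree p \<le> 2 * m - 1"
  shows "set_integrable lborel S (\<lambda>t. poly p t * w t)"
    and "(LINT t:S|lborel. poly p t * w t) = (\<Sum>k=1..m. c k * poly p (x k))"
  using assms unfolding gauss_rule_def by blast+

lemma gauss_rule_cong:
  assumes "\<And>t. t \<in> S \<Longrightarrow> w t = v t"
  shows "gauss_rule w S m x c \<longleftrightarrow> gauss_rule v S m x c"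
proof -
  have "(\<lambda>t. indicator S t *\<^sub>R (poly p t * w t)) = (\<lambda>t. indicator S t *\<^sub>R (poly p t * v t))" for p
    using assms by (auto simp: indicator_def)
  then show ?thesis
    unfolding gauss_rule_def set_integrable_def set_lebesgue_integral_def by simp
qed

lemma gauss_rule_nodes_subset:
  assumes A: "gauss_rule w S m x c" and B: "gauss_rule w S m y d"
  shows "x ` {1..m} \<subseteq> y ` {1..m}"
proof
  fix t assume "t \<in> x ` {1..m}"
  then obtain k where k: "k \<in> {1..m}" "t = x k" by blast
  define Wx where "Wx = node_poly x {1..m}"
  define Wy where "Wy = node_poly y {1..m}"
  define r where "r = Wx - Wy"
  have deg_W: "degree Wx = m" "degree Wy = m"
    by (simp_all add: Wx_def Wy_def degree_node_poly)
  have "lead_coeff Wx = lead_coeff Wy"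
    by (simp add: Wx_def Wy_def lead_coeff_node_poly)
  then have "degree r < m"
    unfolding r_def using k(1) by (intro degree_diff_less_if_lead_coeff_eq deg_W) auto
  then have "degree (r * q) \<le> 2 * m - 1" if "degree q \<le> m" for q
    using degree_mult_le[of r q] that by linarith
  then have deg: "degree (r * Wx) \<le> 2 * m - 1" "degree (r * Wy) \<le> 2 * m - 1" "degree (r * r) \<le> 2 * m - 1"
    using deg_W \<open>degree r < m\<close> by auto
  \<comment> \<open>Each rule integrates the product of r with its own node polynomial exactly, to 0.\<close>
  have "r * r = r * Wx - r * Wy"
    by (simp add: r_def algebra_simps)
  then have "(LINT t:S|lborel. poly (r * r) t * w t)
      = (LINT t:S|lborel. poly (r * Wx) t * w t - poly (r * Wy) t * w t)"
    by (simp only: poly_diff left_diff_distrib)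
  also have "\<dots> = (LINT t:S|lborel. poly (r * Wx) t * w t) - (LINT t:S|lborel. poly (r * Wy) t * w t)"
    by (rule set_integral_diff(2) gauss_rule_exact(1)[OF A deg(1)] gauss_rule_exact(1)[OF B deg(2)])+
  also have "\<dots> = 0"
    using gauss_rule_exact(2)[OF A deg(1)] gauss_rule_exact(2)[OF B deg(2)]
    by (simp add: Wx_def Wy_def poly_node_poly_at_node)
  finally have "(\<Sum>k=1..m. c k * (poly r (x k))\<^sup>2) = 0"
    using gauss_rule_exact(2)[OF A deg(3)] by (simp add: power2_eq_square)
  moreover have c_pos: "c j > 0" if "j \<in> {1..m}" for j
    using A that unfolding gauss_rule_def by blast
  then have "c j * (poly r (x j))\<^sup>2 \<ge> 0" if "j \<in> {1..m}" for j
    using that by (simp add: less_imp_le)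
  ultimately have "c k * (poly r (x k))\<^sup>2 = 0"
    using k(1) by (subst (asm) sum_nonneg_eq_0_iff) auto
  then have "poly r (x k) = 0"
    using c_pos[OF k(1)] by simp
  then have "poly Wy (x k) = 0"
    using k(1) by (simp add: r_def Wx_def poly_node_poly_at_node)
  then show "t \<in> y ` {1..m}"
    using k by (auto simp: Wy_def poly_node_poly_eq_0_iff)
qed

lemma gauss_rule_unique:
  assumes A: "gauss_rule w S m x c" and B: "gauss_rule w S m y d" and i: "i \<in> {1..m}"
  shows "x i = y i \<and> c i = d i"
proof -
  have sorted: "\<forall>i\<in>{1..<m}. x i < x (i + 1)" "\<forall>i\<in>{1..<m}. y i < y (i + 1)"
    using A B unfolding gauss_rule_def by blast+
  have x_eq_y: "x k = y k" if "k \<in> {1..m}" for k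
    using sorted gauss_rule_nodes_subset[OF A B] gauss_rule_nodes_subset[OF B A] that
    by (intro increasing_nodes_unique) auto
  define L where "L = node_poly x ({1..m} - {i})"
  have deg: "degree L \<le> 2 * m - 1"
    using i by (simp add: L_def degree_node_poly)
  have sum_L: "(\<Sum>k=1..m. e k * poly L (x k)) = e i * poly L (x i)" for e
    using i by (simp add: sum.remove[of _ i] L_def poly_node_poly_at_node)
  have "c i * poly L (x i) = (LINT t:S|lborel. poly L t * w t)"
    by (simp only: gauss_rule_exact(2)[OF A deg] sum_L)
  also have "\<dots> = (\<Sum>k=1..m. d k * poly L (y k))"
    by (rule gauss_rule_exact(2)[OF B deg])
  also have "\<dots> = (\<Sum>k=1..m. d k * poly L (x k))"
    using x_eq_y by (intro sum.cong) auto
  also have "\<dots> = d i * poly L (x i)"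
    by (rule sum_L)
  finally have "c i * poly L (x i) = d i * poly L (x i)" .
  moreover have "poly L (x i) \<noteq> 0"
    using increasing_nodes_inj_on[OF sorted(1)] i
    by (auto simp: L_def poly_node_poly_eq_0_iff inj_on_eq_iff)
  ultimately show ?thesis
    using x_eq_y[OF i] by simp
qed

lemma quadrature_weight_pos:
  fixes w :: "real \<Rightarrow> real" and x c :: "nat \<Rightarrow> real"
  assumes "finite I" and "inj_on x I" and i: "i \<in> I" and w_pos: "\<And>t. w t > 0"
    and int: "\<And>p. degree p \<le> 2 * (card I - 1) \<Longrightarrow> integrable lborel (\<lambda>t. poly p t * w t)"
    and exact: "\<And>p. degree p \<le> 2 * (card I - 1) \<Longrightarrow>
      integral\<^sup>L lborel (\<lambda>t. poly p t * w t) = (\<Sum>k\<in>I. c k * poly p (x k))"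
  shows "c i > 0"
proof -
  define L where "L = node_poly x (I - {i})"
  have deg: "degree (L * L) \<le> 2 * (card I - 1)"
    using \<open>finite I\<close> i degree_mult_le[of L L] by (simp add: L_def degree_node_poly)
  have L_xi: "poly L (x i) \<noteq> 0"
    using \<open>inj_on x I\<close> \<open>finite I\<close> i by (auto simp: L_def poly_node_poly_eq_0_iff inj_on_eq_iff)
  then have "0 < integral\<^sup>L lborel (\<lambda>t. (poly L t)\<^sup>2 * w t)"
    using int[OF deg] w_pos by (intro integral_poly_square_pos) (auto simp: power2_eq_square)
  also have "\<dots> = c i * (poly L (x i))\<^sup>2"
    using exact[OF deg] \<open>finite I\<close> i
    by (simp add: power2_eq_square sum.remove[of _ i] L_def poly_node_poly_at_node)
  finally show ?thesis
    using L_xi by (simp add: zero_less_mult_iff)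
qed

section \<open>The symmetrized rule\<close>

lemma sum_centered:
  fixes f :: "nat \<Rightarrow> 'a::comm_monoid_add"
  shows "(\<Sum>i=1..2*n+1. f i) = f (n + 1) + (\<Sum>k=1..n. f (n + 1 + k) + f (n + 1 - k))"
proof -
  have "(\<Sum>i=1..2*n+1. f i) = (\<Sum>i=1..n. f i) + (\<Sum>i=n+1..n+(n+1). f i)"
    by (subst sum.ub_add_nat[symmetric]) (simp_all add: mult_2)
  also have "(\<Sum>i=n+1..n+(n+1). f i) = f (n + 1) + (\<Sum>i=1+(n+1)..n+(n+1). f i)"
    by (subst sum.atLeast_Suc_atMost) simp_all
  also have "(\<Sum>i=1+(n+1)..n+(n+1). f i) = (\<Sum>k=1..n. f (n + 1 + k))"
    by (subst sum.shift_bounds_cl_nat_ivl) (simp add: add.commute)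
  also have "(\<Sum>i=1..n. f i) = (\<Sum>k=1..n. f (n + 1 - k))"
    by (subst sum.atLeastAtMost_rev) (simp add: add.commute)
  finally show ?thesis
    by (simp add: sum.distrib ac_simps)
qed

definition symmetrized_rule ::
  "real \<Rightarrow> nat \<Rightarrow> (nat \<Rightarrow> real) \<Rightarrow> (nat \<Rightarrow> real) \<Rightarrow> (nat \<Rightarrow> real) \<Rightarrow> (nat \<Rightarrow> real) \<Rightarrow> bool" where
  "symmetrized_rule \<mu> n xL wL xH wH \<longleftrightarrow>
     (\<forall>k\<in>{1..n}.
        xH (n + 1 + k) = sqrt (xL k) \<and> wH (n + 1 + k) = wL k / (2 * xL k) \<and>
        xH (n + 1 - k) = - sqrt (xL k) \<and> wH (n + 1 - k) = wL k / (2 * xL k)) \<and>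
     xH (n + 1) = 0 \<and>
     wH (n + 1) = \<mu> - (\<Sum>k=1..n. wH (n + 1 + k) + wH (n + 1 - k))"

lemma symmetrized_rule_exists: "\<exists>xH wH. symmetrized_rule \<mu> n xL wL xH wH"
proof (intro exI)
  define a where "a k = wL k / (2 * xL k)" for k
  let ?xH = "\<lambda>i. if i = n + 1 then 0 else if i > n + 1 then sqrt (xL (i - n - 1))
                 else - sqrt (xL (n + 1 - i))"
  let ?wH = "\<lambda>i. if i = n + 1 then \<mu> - (\<Sum>k=1..n. a k + a k) else if i > n + 1 then a (i - n - 1)
                 else a (n + 1 - i)"
  have outer: "?xH (n + 1 + k) = sqrt (xL k) \<and> ?wH (n + 1 + k) = a k \<and>
      ?xH (n + 1 - k) = - sqrt (xL k) \<and> ?wH (n + 1 - k) = a k" if "k \<in> {1..n}" for k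
    using that by auto
  then have "(\<Sum>k=1..n. ?wH (n + 1 + k) + ?wH (n + 1 - k)) = (\<Sum>k=1..n. a k + a k)"
    by (intro sum.cong) auto
  then show "symmetrized_rule \<mu> n xL wL ?xH ?wH"
    unfolding symmetrized_rule_def using outer by (simp add: a_def)
qed

lemma symmetrized_rule_cong:
  assumes sym: "symmetrized_rule \<mu> n xL wL xH wH"
    and eq: "\<And>i. i \<in> {1..2*n+1} \<Longrightarrow> xH i = xH' i \<and> wH i = wH' i"
  shows "symmetrized_rule \<mu> n xL wL xH' wH'"
proof -
  have outer: "xH' (n + 1 + k) = xH (n + 1 + k) \<and> wH' (n + 1 + k) = wH (n + 1 + k) \<and>
        xH' (n + 1 - k) = xH (n + 1 - k) \<and> wH' (n + 1 - k) = wH (n + 1 - k)" if "k \<in> {1..n}" for k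
  proof -
    have "n + 1 + k \<in> {1..2*n+1}" "n + 1 - k \<in> {1..2*n+1}"
      using that by auto
    from eq[OF this(1)] eq[OF this(2)] show ?thesis
      by simp
  qed
  then have "(\<Sum>k=1..n. wH' (n + 1 + k) + wH' (n + 1 - k)) = (\<Sum>k=1..n. wH (n + 1 + k) + wH (n + 1 - k))"
    by (intro sum.cong) auto
  moreover have "xH' (n + 1) = xH (n + 1)" "wH' (n + 1) = wH (n + 1)"
    using eq[of "n + 1"] by auto
  ultimately show ?thesis
    using sym outer unfolding symmetrized_rule_def by simp
qed

lemma symmetrized_rule_sorted:
  assumes sym: "symmetrized_rule \<mu> n xL wL xH wH"
    and sorted: "\<forall>k\<in>{1..<n}. xL k < xL (k + 1)" and pos: "\<forall>k\<in>{1..n}. xL k > 0"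
  shows "\<forall>i\<in>{1..<2*n+1}. xH i < xH (i + 1)"
proof
  fix i assume i: "i \<in> {1..<2*n+1}"
  define s where "s k = (if k = 0 then 0 else sqrt (xL k))" for k
  have s_less: "s k < s (k + 1)" if "k < n" for k
    using that sorted pos by (cases "k = 0") (auto simp: s_def)
  have right: "xH (n + 1 + k) = s k" and left: "xH (n + 1 - k) = - s k" if "k \<le> n" for k
    using sym that unfolding symmetrized_rule_def s_def by (cases "k = 0"; simp)+
  show "xH i < xH (i + 1)"
  proof (cases "i \<le> n")
    case True
    define k where "k = n - i"
    have "k < n" "i = n + 1 - (k + 1)" "i + 1 = n + 1 - k"
      using True i by (auto simp: k_def)
    then have "xH i = - s (k + 1)" "xH (i + 1) = - s k"
      using left[of "k + 1"] left[of k] by simp_all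
    then show ?thesis
      using s_less[of k] \<open>k < n\<close> by simp
  next
    case False
    define k where "k = i - (n + 1)"
    have "k < n" "i = n + 1 + k" "i + 1 = n + 1 + (k + 1)"
      using False i by (auto simp: k_def)
    then have "xH i = s k" "xH (i + 1) = s (k + 1)"
      using right[of k] right[of "k + 1"] by simp_all
    then show ?thesis
      using s_less[of k] \<open>k < n\<close> by simp
  qed
qed

locale even_weight_halfline_rule =
  fixes E :: "real \<Rightarrow> real" and n :: nat and xL wL :: "nat \<Rightarrow> real"
  assumes even: "\<And>t. E (- t) = E t"
    and pos: "\<And>t. E t > 0"
    and cont: "\<And>t. t > 0 \<Longrightarrow> isCont E t"
    and moments: "\<And>j. integrable lborel (\<lambda>t. t ^ j * E t)"
    and halfline_rule: "gauss_rule (\<lambda>x. sqrt x * E (sqrt x)) {0<..} n xL wL"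
begin

lemma halfline_nodes_pos: "k \<in> {1..n} \<Longrightarrow> xL k > 0"
  using halfline_rule unfolding gauss_rule_def by auto

lemma even_moment_eq_halfline_rule:
  assumes "i \<le> 2 * n - 1"
  shows "2 * (LINT t:{0<..}|lborel. t ^ (2 * i + 2) * E t) = (\<Sum>k=1..n. wL k * xL k ^ i)"
proof -
  define f where "f x = x ^ i * (sqrt x * E (sqrt x))" for x
  have square: "f (t\<^sup>2) * (2 * t) = 2 * (t ^ (2 * i + 2) * E t)" if "t > 0" for t
  proof -
    have "t ^ (2 * i + 2) = (t\<^sup>2) ^ i * t * t"
      by (simp add: power_add power_mult power2_eq_square)
    with that show ?thesis
      by (simp add: f_def mult_ac)
  qed
  have "set_integrable lborel {0<..} (\<lambda>t. 2 * (t ^ (2 * i + 2) * E t))"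
    unfolding set_integrable_def by (intro integrable_mult_indicator integrable_mult_right moments) simp
  then have int: "set_integrable lborel {0<..} (\<lambda>t. f (t\<^sup>2) * (2 * t))"
    by (rule set_integrable_cong[THEN iffD1, rotated -1]) (auto simp: square)
  have f_cont: "isCont f x" if "x > 0" for x
    unfolding f_def using that by (intro continuous_intros isCont_o2[OF _ cont]) auto
  have "2 * (LINT t:{0<..}|lborel. t ^ (2 * i + 2) * E t) = (LINT t:{0<..}|lborel. 2 * (t ^ (2 * i + 2) * E t))"
    by simp
  also have "\<dots> = (LINT t:{0<..}|lborel. f (t\<^sup>2) * (2 * t))"
    by (rule set_lebesgue_integral_cong) (auto simp: square)
  also have "\<dots> = (LINT x:{0<..}|lborel. poly (monom 1 i) x * (sqrt x * E (sqrt x)))"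
    using set_integral_substitution_square(2)[OF f_cont _ int] pos
    by (simp add: f_def poly_monom less_imp_le)
  also have "\<dots> = (\<Sum>k=1..n. wL k * xL k ^ i)"
    using gauss_rule_exact(2)[OF halfline_rule, of "monom 1 i"] assms
    by (simp add: poly_monom degree_monom_eq)
  finally show ?thesis .
qed

lemma symmetrized_rule_moment:
  assumes sym: "symmetrized_rule (integral\<^sup>L lborel E) n xL wL xH wH" and j: "j \<le> 4 * n + 1"
  shows "integral\<^sup>L lborel (\<lambda>t. t ^ j * E t) = (\<Sum>i=1..2*n+1. wH i * xH i ^ j)"
proof -
  define a where "a k = wL k / (2 * xL k)" for k
  have outer: "wH (n + 1 + k) = a k" "wH (n + 1 - k) = a k"
      "xH (n + 1 + k) = sqrt (xL k)" "xH (n + 1 - k) = - sqrt (xL k)" if "k \<in> {1..n}" for k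
    using sym that unfolding symmetrized_rule_def a_def by auto
  have center: "xH (n + 1) = 0" "wH (n + 1) = integral\<^sup>L lborel E - (\<Sum>k=1..n. a k + a k)"
    using sym outer unfolding symmetrized_rule_def by auto
  have rule_sum: "(\<Sum>i=1..2*n+1. wH i * xH i ^ j)
      = wH (n + 1) * 0 ^ j + (\<Sum>k=1..n. a k * (sqrt (xL k) ^ j + (- sqrt (xL k)) ^ j))"
    unfolding sum_centered using center outer by (simp add: distrib_left)
  have "j = 0 \<or> odd j \<or> (\<exists>i. j = 2 * i + 2)"
    by presburger
  then consider "j = 0" | "odd j" | i where "j = 2 * i + 2"
    by blast
  then show ?thesis
  proof cases
    case 1
    then show ?thesis
      unfolding rule_sum using center by (simp add: mult.commute)
  next
    case 2
    then have "j > 0"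
      by (cases j) auto
    moreover have "integral\<^sup>L lborel (\<lambda>t. t ^ j * E t) = 0"
      using 2 even by (intro lborel_integral_odd_eq_0) simp
    ultimately show ?thesis
      unfolding rule_sum using 2 by simp
  next
    case 3
    have "a k * (sqrt (xL k) ^ j + (- sqrt (xL k)) ^ j) = wL k * xL k ^ i" if "k \<in> {1..n}" for k
    proof -
      have "sqrt (xL k) ^ j = (sqrt (xL k) ^ 2) ^ (i + 1)"
        unfolding 3 power_mult[symmetric] by (simp add: algebra_simps)
      then have "sqrt (xL k) ^ j = xL k * xL k ^ i"
        using halfline_nodes_pos[OF that] by simp
      moreover have "(- sqrt (xL k)) ^ j = sqrt (xL k) ^ j"
        using 3 by (simp add: power_minus_even)
      ultimately show ?thesis
        using halfline_nodes_pos[OF that] by (simp add: a_def)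
    qed
    then have "(\<Sum>k=1..n. wL k * xL k ^ i) = (\<Sum>i=1..2*n+1. wH i * xH i ^ j)"
      unfolding rule_sum using 3 by simp
    moreover have "i \<le> 2 * n - 1"
      using j 3 by linarith
    moreover have "integral\<^sup>L lborel (\<lambda>t. t ^ j * E t) = 2 * (LINT t:{0<..}|lborel. t ^ j * E t)"
      by (rule lborel_integral_even[OF moments]) (simp add: even 3)
    ultimately show ?thesis
      using even_moment_eq_halfline_rule 3 by simp
  qed
qed

lemma symmetrized_rule_gauss:
  assumes sym: "symmetrized_rule (integral\<^sup>L lborel E) n xL wL xH wH"
  shows "gauss_rule E UNIV (2 * n + 1) xH wH"
proof -
  note exact = exact_on_polys_if_exact_on_monomials[where d = "4 * n + 1", OF moments symmetrized_rule_moment[OF sym]]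
  have sorted: "\<forall>i\<in>{1..<2*n+1}. xH i < xH (i + 1)"
    using symmetrized_rule_sorted[OF sym] halfline_rule halfline_nodes_pos
    unfolding gauss_rule_def by blast
  have int_I: "integrable lborel (\<lambda>t. poly p t * E t)"
    and exact_I: "integral\<^sup>L lborel (\<lambda>t. poly p t * E t) = (\<Sum>k\<in>{1..2*n+1}. wH k * poly p (xH k))"
    if "degree p \<le> 2 * (card {1..2*n+1} - 1)" for p
    using that by (intro exact; simp)+
  have "wH i > 0" if "i \<in> {1..2*n+1}" for i
    by (rule quadrature_weight_pos[OF _ increasing_nodes_inj_on[OF sorted] that pos int_I exact_I]) simp
  then show ?thesis
    using sorted exact unfolding gauss_rule_def set_integrable_def set_lebesgue_integral_def
    by (simp add: mult_2_right)
qed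

theorem gauss_rule_iff_symmetrized_rule:
  "gauss_rule E UNIV (2 * n + 1) xH wH \<longleftrightarrow> symmetrized_rule (integral\<^sup>L lborel E) n xL wL xH wH"
proof
  obtain xS wS where S: "symmetrized_rule (integral\<^sup>L lborel E) n xL wL xS wS"
    using symmetrized_rule_exists by blast
  assume "gauss_rule E UNIV (2 * n + 1) xH wH"
  then have "xS i = xH i \<and> wS i = wH i" if "i \<in> {1..2*n+1}" for i
    using gauss_rule_unique[OF symmetrized_rule_gauss[OF S]] that by blast
  then show "symmetrized_rule (integral\<^sup>L lborel E) n xL wL xH wH"
    by (rule symmetrized_rule_cong[OF S])
qed (rule symmetrized_rule_gauss)

end

theorem mainTheorem3:
  fixes Q :: "real \<Rightarrow> real" and n :: nat
    and xL wL :: "nat \<Rightarrow> real"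
  assumes analytic: "real_analytic_on Q {0..}"
    and momL: "\<And>j::nat. set_integrable lborel {0..} (\<lambda>x. x ^ j * sqrt x * exp (- Q x))"
    and momH: "\<And>j::nat. integrable lborel (\<lambda>t. t ^ j * exp (- Q (t\<^sup>2)))"
    and n: "n \<ge> 1"
    and L: "gauss_rule (\<lambda>x. sqrt x * exp (- Q x)) {0<..} n xL wL"
  shows "\<forall>xH wH :: nat \<Rightarrow> real.
           gauss_rule (\<lambda>t. exp (- Q (t\<^sup>2))) UNIV (2 * n + 1) xH wH \<longleftrightarrow>
             ((\<forall>k\<in>{1..n}.
                 xH (n + 1 + k) = sqrt (xL k) \<and> wH (n + 1 + k) = wL k / (2 * xL k) \<and>
                 xH (n + 1 - k) = - sqrt (xL k) \<and> wH (n + 1 - k) = wL k / (2 * xL k)) \<and>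
              xH (n + 1) = 0 \<and>
              wH (n + 1) = (LINT t|lborel. exp (- Q (t\<^sup>2)))
                           - (\<Sum>k=1..n. wH (n + 1 + k) + wH (n + 1 - k)))"
proof -
  interpret even_weight_halfline_rule "\<lambda>t. exp (- Q (t\<^sup>2))" n xL wL
  proof
    show "isCont (\<lambda>t. exp (- Q (t\<^sup>2))) t" if "t > 0" for t
      using real_analytic_on_imp_isCont[OF analytic, of "t\<^sup>2"] that
      by (auto intro!: continuous_intros isCont_o2[where g = Q])
    show "gauss_rule (\<lambda>x. sqrt x * exp (- Q ((sqrt x)\<^sup>2))) {0<..} n xL wL"
      using L by (subst gauss_rule_cong[where v = "\<lambda>x. sqrt x * exp (- Q x)"]) auto
  qed (use momH in auto)
  show ?thesis
    using gauss_rule_iff_symmetrized_rule unfolding symmetrized_rule_def by blast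
qed

end
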